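(* Let $\Sigma^n\subset\mathbb{R}^{n+1}$ be a hyperplane through the origin and let $P\subset\Sigma$ be an $(n-1)$-dimensional linear subspace of $\Sigma$. Then each of the two open half-hyperplanes of $\Sigma\setminus P$ is stable.
   Context: Stability operator on a self-shrinker $\Sigma$: $Lf=\Delta f-\tfrac12\langle\vec x,\nabla f\rangle+(|A|^2+\tfrac12)f$. A Jacobi function is a function $u$ with $Lu=0$. A region $\Omega\subset\Sigma$ is stable if there exists a Jacobi function on $\Omega$ that is strictly positive on $\Omega$. *)

theory Defs
  imports "HOL-Analysis.Analysis"
begin

definition is_onb :: "'a::euclidean_space set \<Rightarrow> 'a set \<Rightarrow> bool" where
  "is_onb S B \<longleftrightarrow> B \<subseteq> S \<and> pairwise orthogonal B \<and> (\<forall>b\<in>B. norm b = 1) \<and> span B = S"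

definition onb_of :: "'a::euclidean_space set \<Rightarrow> 'a set" where
  "onb_of S = (SOME B. is_onb S B)"

text \<open>Stability operator on a hyperplane through the origin (a flat self-shrinker),
  L u = Delta u - 1/2 <x, grad u> + (|A|^2 + 1/2) u, where |A|^2 = 0 since the
  second fundamental form of a hyperplane vanishes. Here grad u x is the
  intrinsic gradient (tangent to Sigma) and Hess x the derivative of the gradient;
  the Laplacian is the trace of the Hessian over an orthonormal basis of Sigma.\<close>
definition hyperplane_L ::
  "'a::euclidean_space set \<Rightarrow> ('a \<Rightarrow> real) \<Rightarrow> ('a \<Rightarrow> 'a) \<Rightarrow> ('a \<Rightarrow> 'a \<Rightarrow> 'a) \<Rightarrow> 'a \<Rightarrow> real" where
  "hyperplane_L \<Sigma> u grad Hess x =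
     (\<Sum>b\<in>onb_of \<Sigma>. Hess x b \<bullet> b) - 1/2 * (x \<bullet> grad x) + (0 + 1/2) * u x"

definition jacobi_on :: "'a::euclidean_space set \<Rightarrow> 'a set \<Rightarrow> ('a \<Rightarrow> real) \<Rightarrow> bool" where
  "jacobi_on \<Sigma> \<Omega> u \<longleftrightarrow>
     (\<exists>grad Hess.
        (\<forall>x\<in>\<Omega>. (u has_derivative (\<lambda>h. grad x \<bullet> h)) (at x within \<Sigma>)
               \<and> grad x \<in> \<Sigma>
               \<and> (grad has_derivative Hess x) (at x within \<Sigma>))
      \<and> (\<forall>e. continuous_on \<Omega> (\<lambda>x. Hess x e))
      \<and> (\<forall>x\<in>\<Omega>. hyperplane_L \<Sigma> u grad Hess x = 0))"

definition stable_region :: "'a::euclidean_space set \<Rightarrow> 'a set \<Rightarrow> bool" where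
  "stable_region \<Sigma> \<Omega> \<longleftrightarrow> (\<exists>u. jacobi_on \<Sigma> \<Omega> u \<and> (\<forall>x\<in>\<Omega>. u x > 0))"

end

theory Submission
  imports Defs
begin

(* On a hyperplane \<Sigma> through the origin the second fundamental form
   vanishes, and for a linear function u(x) = w \<bullet> x with w \<in> \<Sigma> we have
   grad u = w, Hess u = 0 and \<langle>x, grad u\<rangle> = u, so
   L u = 0 - u/2 + u/2 = 0: every such linear function is a Jacobi function.
   The subspace P has codimension one in \<Sigma>, hence it is the kernel of such a
   linear function restricted to \<Sigma>: P = \<Sigma> \<inter> {x. v \<bullet> x = 0} for some nonzero
   v \<in> \<Sigma>.  A component C of \<Sigma> - P is connected and misses this kernel, so by
   the intermediate value theorem v \<bullet> x has constant sign on C.  Replacing v by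
   -v if necessary, x \<mapsto> v \<bullet> x is a Jacobi function that is positive on C. *)

text \<open>Linear functions x \<mapsto> w \<bullet> x with w tangent to \<Sigma> are Jacobi functions on
  every region of \<Sigma>: their Hessian vanishes and the drift term cancels the
  zeroth-order term by Euler's identity.\<close>
lemma linear_jacobi:
  fixes \<Sigma> \<Omega> :: "'a::euclidean_space set"
  assumes "w \<in> \<Sigma>"
  shows "jacobi_on \<Sigma> \<Omega> (\<lambda>x. w \<bullet> x)"
  unfolding jacobi_on_def
proof (intro exI[of _ "\<lambda>x. w"] exI[of _ "\<lambda>x h. 0"] conjI ballI allI)
  fix x
  show "((\<lambda>x. w \<bullet> x) has_derivative (\<lambda>h. w \<bullet> h)) (at x within \<Sigma>)"
    by (intro derivative_eq_intros) auto
  show "w \<in> \<Sigma>" by fact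
  show "((\<lambda>x. w) has_derivative (\<lambda>h. 0)) (at x within \<Sigma>)"
    by (rule has_derivative_const)
  show "hyperplane_L \<Sigma> (\<lambda>x. w \<bullet> x) (\<lambda>x. w) (\<lambda>x h. 0) x = 0"
    unfolding hyperplane_L_def by (simp add: inner_commute)
next
  fix e show "continuous_on \<Omega> (\<lambda>x. (\<lambda>x h. 0::'a) x e)" by simp
qed

lemma stable_if_positive_linear:
  fixes \<Sigma> \<Omega> :: "'a::euclidean_space set"
  assumes "w \<in> \<Sigma>" and "\<And>x. x \<in> \<Omega> \<Longrightarrow> w \<bullet> x > 0"
  shows "stable_region \<Sigma> \<Omega>"
  unfolding stable_region_def using linear_jacobi[OF assms(1)] assms(2) by blast

lemma codim_one_subspace_is_kernel:
  fixes \<Sigma> P :: "'a::euclidean_space set"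
  assumes "subspace \<Sigma>" "subspace P" "P \<subseteq> \<Sigma>" "dim P + 1 = dim \<Sigma>"
  obtains v where "v \<noteq> 0" "v \<in> \<Sigma>" "P = \<Sigma> \<inter> {x. v \<bullet> x = 0}"
proof -
  have "P \<subset> \<Sigma>" using assms(3,4) by auto
  then obtain v where v: "v \<noteq> 0" "v \<in> \<Sigma>" and v_perp: "\<And>y. y \<in> P \<Longrightarrow> orthogonal v y"
    using orthogonal_to_subspace_exists_gen assms(1,2) span_base
    by (metis span_eq_iff)
  define Q where "Q = \<Sigma> \<inter> {x. v \<bullet> x = 0}"
  have Q_subspace: "subspace Q"
    unfolding Q_def by (intro subspace_inter assms(1) subspace_hyperplane)
  have P_le_Q: "P \<subseteq> Q"
    using v_perp assms(3) by (auto simp: Q_def orthogonal_def)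
  have "v \<notin> Q" using v(1) by (simp add: Q_def)
  hence "Q \<subset> \<Sigma>" using v(2) unfolding Q_def by blast
  hence "dim Q < dim \<Sigma>"
    using dim_psubset Q_subspace assms(1) by (metis span_eq_iff)
  hence "dim Q \<le> dim P" using assms(4) by simp
  hence "P = Q" using subspace_dim_equal[OF assms(2) Q_subspace P_le_Q] by simp
  with v show ?thesis using that Q_def by blast
qed

lemma connected_in_half_space:
  fixes C :: "'a::euclidean_space set"
  assumes "connected C" and avoid: "\<And>x. x \<in> C \<Longrightarrow> v \<bullet> x \<noteq> 0"
  shows "(\<forall>x\<in>C. v \<bullet> x > 0) \<or> (\<forall>x\<in>C. v \<bullet> x < 0)"
proof (rule ccontr)
  assume "\<not> ?thesis"
  then obtain a b where "a \<in> C" "b \<in> C" "v \<bullet> a \<le> 0" "v \<bullet> b \<ge> 0"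
    by (auto simp: not_less)
  from connected_ivt_hyperplane[OF assms(1) this] avoid show False by auto
qed

theorem proposition4p1:
  fixes \<Sigma> P C :: "'a::euclidean_space set"
  assumes "DIM('a) \<ge> 2"
    and "subspace \<Sigma>" and "dim \<Sigma> = DIM('a) - 1"
    and "subspace P" and "P \<subseteq> \<Sigma>" and "dim P = dim \<Sigma> - 1"
    and "C \<in> components (\<Sigma> - P)"
  shows "stable_region \<Sigma> C"
proof -
  have "dim P + 1 = dim \<Sigma>" using assms(1,3,6) by simp
  then obtain v where "v \<in> \<Sigma>" and P_eq: "P = \<Sigma> \<inter> {x. v \<bullet> x = 0}"
    using codim_one_subspace_is_kernel assms(2,4,5) by blast
  have "C \<subseteq> \<Sigma> - P" using in_components_subset[OF assms(7)] .
  hence "\<And>x. x \<in> C \<Longrightarrow> v \<bullet> x \<noteq> 0" using P_eq by auto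
  with in_components_connected[OF assms(7)]
  have "(\<forall>x\<in>C. v \<bullet> x > 0) \<or> (\<forall>x\<in>C. (- v) \<bullet> x > 0)"
    by (auto dest: connected_in_half_space)
  moreover have "- v \<in> \<Sigma>" using \<open>v \<in> \<Sigma>\<close> assms(2) by (simp add: subspace_neg)
  ultimately show ?thesis
    using stable_if_positive_linear \<open>v \<in> \<Sigma>\<close> by metis
qed

end
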